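(* For $v\in\mathbb R$ consider the stationary phase points, i.e. the zeros of the polynomial $12\prod_{k=0}^g(z-\tilde\lambda_k)+v\prod_{k=1}^g(z-\lambda_k)$, denoted $z_j(v)$, $0\le j\le g$. Set $\lambda_0=-\infty$ and $\lambda_{g+1}=\infty$. Then (with suitable labelling) $\lambda_j<z_j(v)<\lambda_{j+1}$, and there is always at least one stationary phase point in each spectral gap. Moreover, each $z_j(v)$ is strictly decreasing in $v$ with $\lim_{v\to-\infty}z_j(v)=\lambda_{j+1}$ and $\lim_{v\to\infty}z_j(v)=\lambda_j$.
   Context: Fix $g\in\mathbb N_0$ and real $E_0<E_1<\dots<E_{2g}$; $R_{2g+1}^{1/2}(z)=\mathrm i\prod_{j=0}^{2g}\sqrt{z-E_j}$ defines the hyperelliptic Riemann surface $\mathcal K_g$, with spectrum $\sigma=\bigcup_{j=0}^{g-1}[E_{2j},E_{2j+1}]\cup[E_{2g},\infty)$ and spectral gaps $(E_{2j-1},E_{2j})$, $1\le j\le g$. The numbers $\lambda_j$ ($1\le j\le g$) and $\tilde\lambda_j$ ($0\le j\le g$) are defined by requiring that $\omega_{p_\infty,0}=\frac1{2\mathrm i}\frac{\prod_{j=1}^g(\pi-\lambda_j)}{R_{2g+1}^{1/2}}d\pi$ and $\omega_{p_\infty,2}=\frac1{2\mathrm i}\frac{\prod_{j=0}^g(\pi-\tilde\lambda_j)}{R_{2g+1}^{1/2}}d\pi$ have vanishing $a$-periods (the $a_j$ cycle encircles the $j$-th gap changing sheets), with $\sum_{j=0}^g\tilde\lambda_j=\frac12\sum_{j=0}^{2g}E_j$;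 they are real, $\lambda_j$ and $\tilde\lambda_j$ ($j\ge1$) lie in the $j$-th gap. The stationary phase points are the zeros of $\phi'$ for the phase $\phi(p)=-24\mathrm i\int^p\omega_{p_\infty,2}-2\mathrm iv\int^p\omega_{p_\infty,0}$. *)

theory Defs
  imports "HOL-Analysis.Analysis"
begin

text \<open>Vanishing of the a_j-period of the differential (1/2i) p(pi)/R_{2g+1}^{1/2} d pi.
  The cycle a_j encircles the j-th gap (E_{2j-1}, E_{2j}) changing sheets, so the a_j-period
  equals a nonzero constant times the (absolutely convergent) real integral over the gap of
  p(x)/sqrt|prod_i (x - E_i)|.  Hence vanishing of the period means this integral is 0.\<close>
definition a_period_vanishes :: "(nat \<Rightarrow> real) \<Rightarrow> nat \<Rightarrow> (real \<Rightarrow> real) \<Rightarrow> nat \<Rightarrow> bool" where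
  "a_period_vanishes E g p j \<longleftrightarrow>
     ((\<lambda>x. p x / sqrt \<bar>\<Prod>i\<in>{0..2*g}. x - E i\<bar>) has_integral 0) {E (2*j-1)..E (2*j)}"

end

theory Submission
  imports Defs
begin

text \<open>
  The stationary phase points are the roots of the pencil \<open>Lt - c Lam\<close> with \<open>c = -v/12\<close>, where
  \<open>Lt\<close> and \<open>Lam\<close> are the monic polynomials with roots \<open>lt 0, \<dots>, lt g\<close> and \<open>lam 1, \<dots>, lam g\<close>.
  Every member of the pencil has vanishing a-periods, so it changes sign in each of the \<open>g\<close>
  spectral gaps. It cannot have a double root \<open>x\<^sub>0\<close>: the quotient by \<open>(x - x\<^sub>0)\<^sup>2\<close>, of degree
  at most \<open>g - 1\<close>, would still have to change sign in all \<open>g\<close> gaps. Hence the Wronskian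
  \<open>Lt' Lam - Lt Lam'\<close> has no real zero, and it is positive since its leading coefficient is 1.
  So \<open>Lt/Lam\<close> is strictly increasing between consecutive poles \<open>lam j\<close>, and being unbounded at
  the poles and at infinity it maps each of the \<open>g + 1\<close> intervals between them onto the reals.
  The root in the \<open>j\<close>-th interval is the inverse of \<open>Lt/Lam\<close> at \<open>-v/12\<close>; this gives its
  uniqueness, its monotonicity in \<open>v\<close> and its limits at the ends of the interval.
\<close>

lemma continuous_on_interval_nonzero_sign:
  fixes f :: "real \<Rightarrow> real"
  assumes "is_interval S" "continuous_on S f" "\<And>x. x \<in> S \<Longrightarrow> f x \<noteq> 0"
  shows "(\<forall>x\<in>S. 0 < f x) \<or> (\<forall>x\<in>S. f x < 0)"
proof (rule ccontr)
  assume "\<not> ?thesis"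
  then obtain x y where xy: "x \<in> S" "y \<in> S" "f x < 0" "0 < f y"
    using assms(3) by (meson linorder_neqE_linordered_idom)
  have "connected (f ` S)"
    using assms(1,2) by (simp add: connected_continuous_image is_interval_connected)
  then have "0 \<in> f ` S"
    using connectedD_interval[of "f ` S" "f x" "f y" 0] xy by (simp add: less_imp_le)
  then show False using assms(3) by auto
qed

lemma has_integral_0_Icc_imp_0_on_Ioo:
  fixes f :: "real \<Rightarrow> real"
  assumes int: "(f has_integral 0) {a..b}" and nonneg: "\<And>x. x \<in> {a..b} \<Longrightarrow> 0 \<le> f x"
    and cont: "continuous_on {a<..<b} f" and x: "x \<in> {a<..<b}"
  shows "f x = 0"
proof -
  define c d where "c = (a + x) / 2" and "d = (x + b) / 2"
  have cd: "c < d" "{c..d} \<subseteq> {a<..<b}" "x \<in> {c..d}" using x by (auto simp: c_def d_def)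
  have cont_cd: "continuous_on {c..d} f" using cont cd(2) by (rule continuous_on_subset)
  have nonneg_cd: "\<And>y. y \<in> {c..d} \<Longrightarrow> 0 \<le> f y" using cd(2) nonneg by auto
  have "{c..d} \<subseteq> {a..b}" using cd(2) by auto
  then have "integral {c..d} f \<le> 0"
    using has_integral_subset_le[OF _ integrable_integral[OF integrable_continuous_interval[OF cont_cd]] int]
      nonneg by blast
  moreover have "0 \<le> integral {c..d} f"
    using nonneg_cd by (intro integral_nonneg integrable_continuous_interval cont_cd) auto
  ultimately have "integral {c..d} f = 0" by simp
  then show ?thesis using integral_eq_0_iff[OF cont_cd cd(1) nonneg_cd] cd(3) by blast
qed

lemma mono_on_image_eq_UNIV_if_unbounded:
  fixes f :: "real \<Rightarrow> real" and L R :: "real filter"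
  assumes S: "is_interval S" "S \<noteq> {}" and cont: "continuous_on S f" and mono: "mono_on S f"
    and L: "L \<noteq> bot" "\<And>y. y \<in> S \<Longrightarrow> eventually (\<lambda>x. x \<in> S \<and> x \<le> y) L"
      "filterlim f at_infinity L"
    and R: "R \<noteq> bot" "\<And>y. y \<in> S \<Longrightarrow> eventually (\<lambda>x. x \<in> S \<and> y \<le> x) R"
      "filterlim f at_infinity R"
  shows "f ` S = UNIV"
proof -
  have "c \<in> f ` S" for c
  proof -
    obtain y where y: "y \<in> S" using S(2) by blast
    define M where "M = \<bar>c\<bar> + \<bar>f y\<bar>"
    have large: "eventually (\<lambda>x. M < \<bar>f x\<bar>) F" if "filterlim f at_infinity F" for F
      using filterlim_at_infinity_imp_norm_at_top[OF that] by (simp add: filterlim_at_top_dense)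
    obtain xl where xl: "xl \<in> S" "xl \<le> y" "M < \<bar>f xl\<bar>"
      using eventually_happens'[OF L(1) eventually_conj[OF L(2)[OF y] large[OF L(3)]]] by blast
    obtain xr where xr: "xr \<in> S" "y \<le> xr" "M < \<bar>f xr\<bar>"
      using eventually_happens'[OF R(1) eventually_conj[OF R(2)[OF y] large[OF R(3)]]] by blast
    have "f xl \<le> f y" "f y \<le> f xr"
      using mono_onD[OF mono xl(1) y xl(2)] mono_onD[OF mono y xr(1) xr(2)] by auto
    then have "f xl \<le> c" "c \<le> f xr"
      using xl(3) xr(3) unfolding M_def by linarith+
    moreover have sub: "{xl..xr} \<subseteq> S"
      using S(1) xl(1) xr(1) by (meson atLeastAtMost_iff is_interval_1 subsetI)
    ultimately obtain x where "x \<in> {xl..xr}" "f x = c"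
      using IVT'[of f xl c xr] xl(2) xr(2) continuous_on_subset[OF cont sub] by auto
    then show ?thesis using sub by (metis image_eqI subsetD)
  qed
  then show ?thesis by blast
qed

lemma filterlim_neg_divide_at_top_at_bot:
  fixes a :: real
  assumes "0 < a"
  shows "filterlim (\<lambda>v. - v / a) at_top at_bot"
  unfolding filterlim_at_top
proof
  show "eventually (\<lambda>v. Z \<le> - v / a) at_bot" for Z
    using eventually_le_at_bot[of "- a * Z"] by eventually_elim (use assms in \<open>simp add: field_simps\<close>)
qed

lemma filterlim_neg_divide_at_bot_at_top:
  fixes a :: real
  assumes "0 < a"
  shows "filterlim (\<lambda>v. - v / a) at_bot at_top"
  unfolding filterlim_at_bot
proof
  show "eventually (\<lambda>v. - v / a \<le> Z) at_top" for Z
    using eventually_ge_at_top[of "- a * Z"] by eventually_elim (use assms in \<open>simp add: field_simps\<close>)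
qed

lemma lift_Suc_mono_less_bounded:
  fixes E :: "nat \<Rightarrow> 'a::order"
  assumes "\<forall>i<n. E i < E (Suc i)" "i < j" "j \<le> n"
  shows "E i < E j"
  using assms(2,3)
proof (induction j)
  case (Suc j)
  have "E j < E (Suc j)" using assms(1) Suc.prems(2) by simp
  moreover have "i = j \<or> E i < E j" using Suc by (auto simp: less_Suc_eq)
  ultimately show ?case by (metis less_trans)
qed simp

lemma lift_Suc_mono_le_bounded:
  fixes E :: "nat \<Rightarrow> 'a::order"
  assumes "\<forall>i<n. E i < E (Suc i)" "i \<le> j" "j \<le> n"
  shows "E i \<le> E j"
  using lift_Suc_mono_less_bounded[OF assms(1), of i j] assms(2,3) by (cases "i = j") auto

lemma poly_roots_eq_if_card_ge_degree:
  fixes p :: "'a::idom poly"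
  assumes "p \<noteq> 0" "finite S" "\<And>x. x \<in> S \<Longrightarrow> poly p x = 0" "degree p \<le> card S"
  shows "{x. poly p x = 0} = S"
proof -
  have fin: "finite {x. poly p x = 0}" by (rule poly_roots_finite[OF assms(1)])
  have sub: "S \<subseteq> {x. poly p x = 0}" using assms(3) by blast
  have "card {x. poly p x = 0} \<le> card S"
    using card_poly_roots_bound[OF assms(1)] assms(4) by (rule order_trans)
  then have "card S = card {x. poly p x = 0}" using card_mono[OF fin sub] by (rule antisym[rotated])
  then show ?thesis using card_subset_eq[OF fin sub] by simp
qed

lemma degree_prod_linear:
  fixes a :: "'b \<Rightarrow> 'a::idom"
  assumes "finite A"
  shows "degree (\<Prod>k\<in>A. [:- a k, 1:]) = card A"
  using assms by (subst degree_prod_eq_sum_degree) auto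

lemma lead_coeff_prod_linear:
  fixes a :: "'b \<Rightarrow> 'a::idom"
  shows "lead_coeff (\<Prod>k\<in>A. [:- a k, 1:]) = 1"
  by (simp add: lead_coeff_prod)

lemma eventually_poly_nonzero_at:
  fixes p :: "'a::{real_normed_field} poly"
  assumes "p \<noteq> 0"
  shows "eventually (\<lambda>x. poly p x \<noteq> 0) (at a)"
proof -
  have "open (- ({x. poly p x = 0} - {a}))"
    using poly_roots_finite[OF assms] by (intro open_Compl finite_imp_closed) auto
  then show ?thesis
    by (rule eventually_mono[OF eventually_at_in_open]) auto
qed

lemma degree_diff_smult_eq_left:
  fixes p q :: "'a::field poly"
  assumes "degree q < degree p"
  shows "degree (p - smult c q) = degree p"
  using degree_add_eq_left[of "smult (- c) q" p] assms by (simp add: le_less_trans[OF degree_smult_le])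

section \<open>Spectral gaps and vanishing a-periods\<close>

definition spectral_gap :: "(nat \<Rightarrow> real) \<Rightarrow> nat \<Rightarrow> real set" where
  "spectral_gap E j = {E (2*j-1)<..<E (2*j)}"

lemma spectral_gap_less:
  fixes E :: "nat \<Rightarrow> real"
  assumes E: "\<forall>i<2*g. E i < E (Suc i)" and "j < k" "k \<le> g"
    and "x \<in> spectral_gap E j" "y \<in> spectral_gap E k"
  shows "x < y"
proof -
  have "E (2*j) \<le> E (2*k-1)"
    using lift_Suc_mono_le_bounded[OF E, of "2*j" "2*k-1"] assms(2,3) by simp
  then show ?thesis using assms(4,5) by (simp add: spectral_gap_def)
qed

lemma spectral_gap_ends_less:
  fixes E :: "nat \<Rightarrow> real"
  assumes E: "\<forall>i<2*g. E i < E (Suc i)" and j: "j \<in> {1..g}"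
  shows "E (2*j-1) < E (2*j)"
  using lift_Suc_mono_less_bounded[OF E, of "2*j-1" "2*j"] j by auto

lemma poly_sign_on_spectral_gap:
  fixes p :: "real poly"
  assumes "\<forall>x\<in>spectral_gap E j. poly p x \<noteq> 0"
  shows "(\<forall>x\<in>spectral_gap E j. 0 < poly p x) \<or> (\<forall>x\<in>spectral_gap E j. poly p x < 0)"
  using assms by (intro continuous_on_interval_nonzero_sign)
    (auto simp: spectral_gap_def is_interval_box intro!: continuous_intros)

lemma a_period_weight_pos:
  fixes E :: "nat \<Rightarrow> real"
  assumes E: "\<forall>i<2*g. E i < E (Suc i)" and j: "j \<in> {1..g}" and x: "x \<in> spectral_gap E j"
  shows "0 < sqrt \<bar>\<Prod>i\<in>{0..2*g}. x - E i\<bar>"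
proof -
  have "x \<noteq> E i" if "i \<le> 2*g" for i
  proof (cases "i \<le> 2*j-1")
    case True
    moreover have "2*j-1 \<le> 2*g" using j by auto
    ultimately have "E i \<le> E (2*j-1)" by (rule lift_Suc_mono_le_bounded[OF E])
    then show ?thesis using x by (auto simp: spectral_gap_def)
  next
    case False
    then have "E (2*j) \<le> E i" using that by (intro lift_Suc_mono_le_bounded[OF E]) auto
    then show ?thesis using x by (auto simp: spectral_gap_def)
  qed
  then show ?thesis by auto
qed

lemma a_period_vanishes_sign_imp_zero:
  fixes E :: "nat \<Rightarrow> real" and p :: "real poly"
  assumes E: "\<forall>i<2*g. E i < E (Suc i)" and j: "j \<in> {1..g}"
    and per: "a_period_vanishes E g (poly p) j"
    and sign: "(\<forall>x\<in>spectral_gap E j. 0 \<le> poly p x) \<or> (\<forall>x\<in>spectral_gap E j. poly p x \<le> 0)"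
  shows "p = 0"
proof -
  define a b where "a = E (2*j-1)" and "b = E (2*j)"
  define w where "w x = sqrt \<bar>\<Prod>i\<in>{0..2*g}. x - E i\<bar>" for x
  have gap: "spectral_gap E j = {a<..<b}" by (simp add: spectral_gap_def a_def b_def)
  have w_pos: "0 < w x" if "x \<in> {a<..<b}" for x
    using a_period_weight_pos[OF E j] that gap by (simp add: w_def)
  \<comment> \<open>The weight vanishes at the ends of the gap, where the integrand is 0 since \<open>x / 0 = 0\<close>.\<close>
  have ends: "2*j-1 \<in> {0..2*g}" "2*j \<in> {0..2*g}" using j by auto
  have w_ends: "w a = 0" "w b = 0"
    unfolding w_def a_def b_def
    by (simp_all add: prod_zero bexI[OF _ ends(1)] bexI[OF _ ends(2)])
  obtain \<sigma> :: real where \<sigma>: "\<sigma> \<noteq> 0" "\<And>x. x \<in> {a<..<b} \<Longrightarrow> 0 \<le> \<sigma> * poly p x"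
    using sign gap by (metis mult_1 mult_minus1 neg_0_le_iff_le zero_neq_neg_one one_neq_zero)
  define f where "f = (\<lambda>x. \<sigma> * poly p x / w x)"
  have int: "(f has_integral 0) {a..b}"
    using has_integral_mult_right[OF per[unfolded a_period_vanishes_def], of \<sigma>]
    unfolding f_def w_def a_def b_def by simp
  have nonneg: "0 \<le> f x" if "x \<in> {a..b}" for x
  proof (cases "x = a \<or> x = b")
    case False
    then have "x \<in> {a<..<b}" using that by auto
    then show ?thesis using \<sigma>(2) w_pos unfolding f_def by (simp add: less_imp_le)
  qed (use w_ends in \<open>auto simp: f_def\<close>)
  have cont: "continuous_on {a<..<b} f"
    unfolding f_def w_def using w_pos[unfolded w_def]
    by (intro continuous_intros) auto
  have "poly p x = 0" if "x \<in> {a<..<b}" for x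
    using has_integral_0_Icc_imp_0_on_Ioo[OF int nonneg cont that] w_pos[OF that] \<sigma>(1)
    by (simp add: f_def)
  then have "{a<..<b} \<subseteq> {x. poly p x = 0}" by blast
  moreover have "infinite {a<..<b}" using spectral_gap_ends_less[OF E j] by (simp add: a_def b_def)
  ultimately show "p = 0" using poly_roots_finite finite_subset by blast
qed

lemma a_period_vanishes_diff_scaled:
  assumes "a_period_vanishes E g f j" "a_period_vanishes E g h j"
  shows "a_period_vanishes E g (\<lambda>x. f x - c * h x) j"
  using has_integral_diff[OF assms(1)[unfolded a_period_vanishes_def]
      has_integral_mult_right[OF assms(2)[unfolded a_period_vanishes_def], of c]]
  unfolding a_period_vanishes_def by (simp add: diff_divide_distrib)

lemma a_period_vanishes_imp_root_in_gap:
  fixes E :: "nat \<Rightarrow> real" and p :: "real poly"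
  assumes E: "\<forall>i<2*g. E i < E (Suc i)" and j: "j \<in> {1..g}"
    and per: "a_period_vanishes E g (poly p) j" and "p \<noteq> 0"
  shows "\<exists>x\<in>spectral_gap E j. poly p x = 0"
proof (rule ccontr)
  assume "\<not> ?thesis"
  then have "(\<forall>x\<in>spectral_gap E j. 0 < poly p x) \<or> (\<forall>x\<in>spectral_gap E j. poly p x < 0)"
    by (intro poly_sign_on_spectral_gap) blast
  then have "p = 0"
    by (intro a_period_vanishes_sign_imp_zero[OF E j per]) (auto simp: less_imp_le)
  with \<open>p \<noteq> 0\<close> show False ..
qed

lemma card_gaps_le_degree:
  fixes E :: "nat \<Rightarrow> real" and p :: "real poly"
  assumes E: "\<forall>i<2*g. E i < E (Suc i)" and "p \<noteq> 0"
    and roots: "\<forall>j\<in>{1..g}. \<exists>x\<in>spectral_gap E j. poly p x = 0"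
  shows "g \<le> degree p"
proof -
  obtain y where y: "\<And>j. j \<in> {1..g} \<Longrightarrow> y j \<in> spectral_gap E j \<and> poly p (y j) = 0"
    using roots by metis
  have "inj_on y {1..g}"
  proof (rule inj_onI)
    fix j k assume "j \<in> {1..g}" "k \<in> {1..g}" "y j = y k"
    then show "j = k"
      using spectral_gap_less[OF E, of j k] spectral_gap_less[OF E, of k j] y
      by (metis atLeastAtMost_iff less_irrefl linorder_neqE_nat)
  qed
  then have "g = card (y ` {1..g})" by (simp add: card_image)
  also have "\<dots> \<le> card {x. poly p x = 0}"
    using y by (intro card_mono poly_roots_finite \<open>p \<noteq> 0\<close>) auto
  also have "\<dots> \<le> degree p" by (rule card_poly_roots_bound[OF \<open>p \<noteq> 0\<close>])
  finally show ?thesis .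
qed

lemma rsquarefree_if_a_periods_vanish:
  fixes E :: "nat \<Rightarrow> real" and p :: "real poly"
  assumes E: "\<forall>i<2*g. E i < E (Suc i)" and "p \<noteq> 0" and deg: "degree p \<le> Suc g"
    and per: "\<forall>j\<in>{1..g}. a_period_vanishes E g (poly p) j"
  shows "rsquarefree p"
proof (rule ccontr)
  assume "\<not> rsquarefree p"
  then obtain a where "order a p \<noteq> 0" "order a p \<noteq> 1"
    using \<open>p \<noteq> 0\<close> unfolding rsquarefree_def by blast
  then have "2 \<le> order a p" by linarith
  then obtain K where p: "p = [:-a, 1:]^2 * K" using order_divides[of a 2 p] by (auto elim: dvdE)
  have "K \<noteq> 0" using \<open>p \<noteq> 0\<close> p by auto
  have "degree p = 2 + degree K"
    unfolding p using \<open>K \<noteq> 0\<close> by (subst degree_mult_eq) (auto simp: degree_linear_power)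
  have poly_p: "poly p x = (x - a)^2 * poly K x" for x by (simp add: p)
  have "\<exists>x\<in>spectral_gap E j. poly K x = 0" if j: "j \<in> {1..g}" for j
  proof (rule ccontr)
    assume "\<not> ?thesis"
    then have "(\<forall>x\<in>spectral_gap E j. 0 < poly K x) \<or> (\<forall>x\<in>spectral_gap E j. poly K x < 0)"
      by (intro poly_sign_on_spectral_gap) blast
    then have "(\<forall>x\<in>spectral_gap E j. 0 \<le> poly p x) \<or> (\<forall>x\<in>spectral_gap E j. poly p x \<le> 0)"
      unfolding poly_p by (auto simp: mult_nonneg_nonpos less_imp_le)
    then have "p = 0" using per j by (intro a_period_vanishes_sign_imp_zero[OF E j]) auto
    with \<open>p \<noteq> 0\<close> show False ..
  qed
  then have "g \<le> degree K" by (intro card_gaps_le_degree[OF E \<open>K \<noteq> 0\<close>]) auto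
  then show False using \<open>degree p = 2 + degree K\<close> deg by simp
qed

section \<open>Pencils of polynomials with square-free members\<close>

locale squarefree_pencil =
  fixes P Q :: "real poly" and g :: nat and lam :: "nat \<Rightarrow> real"
  assumes Q_def: "Q = (\<Prod>k\<in>{1..g}. [:- lam k, 1:])"
    and lam_strict_mono: "strict_mono_on {1..g} lam"
    and degree_P: "degree P = Suc g" and lead_coeff_P: "lead_coeff P = 1"
    and rsquarefree_pencil: "\<And>c. rsquarefree (P - smult c Q)"
begin

definition wronskian :: "real poly" where
  "wronskian = pderiv P * Q - P * pderiv Q"

definition ratio :: "real \<Rightarrow> real" where
  "ratio x = poly P x / poly Q x"

text \<open>The \<open>j\<close>-th interval between consecutive poles of \<open>ratio\<close>, with the conventions
  \<open>lam 0 = -\<infinity>\<close> and \<open>lam (g + 1) = \<infinity>\<close>.\<close>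

definition pole_interval :: "nat \<Rightarrow> real set" where
  "pole_interval j = {x. (j = 0 \<or> lam j < x) \<and> (j = g \<or> x < lam (Suc j))}"

lemma degree_Q: "degree Q = g"
  by (simp add: Q_def degree_prod_linear)

lemma lead_coeff_Q: "lead_coeff Q = 1"
  unfolding Q_def by (rule lead_coeff_prod_linear)

lemma Q_nonzero: "Q \<noteq> 0"
  using lead_coeff_Q by auto

lemma poly_Q_eq_0_iff: "poly Q x = 0 \<longleftrightarrow> (\<exists>k\<in>{1..g}. x = lam k)"
  by (auto simp: Q_def poly_prod)

lemma pderiv_Q_eq_0_if_g_0: "g = 0 \<Longrightarrow> pderiv Q = 0"
  using degree_Q by (simp add: pderiv_eq_0_iff)

lemma poly_pderiv_Q_lam_nonzero:
  assumes k: "k \<in> {1..g}"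
  shows "poly (pderiv Q) (lam k) \<noteq> 0"
proof -
  define R where "R = (\<Prod>m\<in>{1..g} - {k}. [:- lam m, 1:])"
  have "Q = [:- lam k, 1:] * R" unfolding Q_def R_def using k by (simp add: prod.remove)
  then have "poly (pderiv Q) (lam k) = poly R (lam k)"
    by (simp only:) (subst pderiv_mult, simp add: pderiv_pCons)
  also have "\<dots> \<noteq> 0"
    using strict_mono_on_imp_inj_on[OF lam_strict_mono] k
    by (auto simp: R_def poly_prod inj_on_eq_iff)
  finally show ?thesis .
qed

lemma wronskian_nonzero: "poly wronskian x \<noteq> 0"
proof
  assume W: "poly wronskian x = 0"
  \<comment> \<open>Then \<open>x\<close> is a double root of a suitable member of the pencil.\<close>
  obtain c where "poly (P - smult c Q) x = 0" "poly (pderiv (P - smult c Q)) x = 0"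
  proof (cases "poly Q x = 0")
    case True
    then obtain k where k: "k \<in> {1..g}" "x = lam k" by (auto simp: poly_Q_eq_0_iff)
    have Q': "poly (pderiv Q) x \<noteq> 0" using poly_pderiv_Q_lam_nonzero k by simp
    then have "poly P x = 0" using W True by (simp add: wronskian_def)
    then show ?thesis
      using True Q' by (intro that[of "poly (pderiv P) x / poly (pderiv Q) x"])
        (simp_all add: pderiv_diff pderiv_smult)
  next
    case False
    then show ?thesis
      using W by (intro that[of "poly P x / poly Q x"])
        (simp_all add: wronskian_def pderiv_diff pderiv_smult field_simps)
  qed
  then show False using rsquarefree_pencil rsquarefree_roots by blast
qed

lemma coeff_pderiv_P_mult_Q: "coeff (pderiv P * Q) (2*g) = real (Suc g)"
proof -
  have "coeff (pderiv P * Q) (degree (pderiv P) + degree Q) = coeff (pderiv P) g * lead_coeff Q"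
    using coeff_mult_degree_sum[of "pderiv P" Q] by (simp add: degree_pderiv degree_P degree_Q)
  then show ?thesis
    by (simp add: degree_pderiv degree_P degree_Q lead_coeff_Q[unfolded degree_Q] coeff_pderiv
        lead_coeff_P[unfolded degree_P] mult_2)
qed

lemma coeff_P_mult_pderiv_Q: "coeff (P * pderiv Q) (2*g) = real g"
proof (cases "g = 0")
  case True
  then show ?thesis using pderiv_Q_eq_0_if_g_0 by simp
next
  case False
  have "coeff (P * pderiv Q) (degree P + degree (pderiv Q)) = lead_coeff P * coeff (pderiv Q) (g - 1)"
    using coeff_mult_degree_sum[of P "pderiv Q"] by (simp add: degree_pderiv degree_Q)
  moreover have "degree P + degree (pderiv Q) = 2*g"
    using False by (simp add: degree_pderiv degree_P degree_Q)
  ultimately show ?thesis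
    using False lead_coeff_Q by (simp add: lead_coeff_P coeff_pderiv degree_Q)
qed

lemma lead_coeff_wronskian: "lead_coeff wronskian = 1"
proof -
  have coeff: "coeff wronskian (2*g) = 1"
    by (simp add: wronskian_def coeff_pderiv_P_mult_Q coeff_P_mult_pderiv_Q)
  have "degree (pderiv P * Q) \<le> 2*g"
    using degree_mult_le[of "pderiv P" Q] by (simp add: degree_pderiv degree_P degree_Q)
  moreover have "degree (P * pderiv Q) \<le> 2*g"
  proof (cases "g = 0")
    case True
    then show ?thesis using pderiv_Q_eq_0_if_g_0 by simp
  next
    case False
    then show ?thesis
      using degree_mult_le[of P "pderiv Q"] by (simp add: degree_pderiv degree_P degree_Q)
  qed
  ultimately have "degree wronskian \<le> 2*g"
    unfolding wronskian_def by (intro degree_diff_le)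
  moreover have "2*g \<le> degree wronskian" using coeff by (intro le_degree) simp
  ultimately show ?thesis using coeff by simp
qed

lemma wronskian_pos: "0 < poly wronskian x"
proof -
  have "(\<forall>x\<in>UNIV. 0 < poly wronskian x) \<or> (\<forall>x\<in>UNIV. poly wronskian x < 0)"
    using wronskian_nonzero by (intro continuous_on_interval_nonzero_sign) (auto intro: continuous_intros)
  moreover obtain y where "1 \<le> poly wronskian y"
    using poly_pinfty_gt_lc[of wronskian] lead_coeff_wronskian by auto
  ultimately show ?thesis by (metis UNIV_I not_one_le_zero order.strict_trans1 order_less_imp_le)
qed

lemma is_interval_pole_interval: "is_interval (pole_interval j)"
  unfolding is_interval_1 pole_interval_def by auto

lemma poly_Q_nonzero_on_pole_interval:
  assumes "j \<le> g" "x \<in> pole_interval j"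
  shows "poly Q x \<noteq> 0"
proof
  assume "poly Q x = 0"
  then obtain k where k: "k \<in> {1..g}" "x = lam k" by (auto simp: poly_Q_eq_0_iff)
  show False
  proof (cases "k \<le> j")
    case True
    then have "lam j < x" using k assms(2) by (auto simp: pole_interval_def)
    moreover have "lam k \<le> lam j"
      using k True assms(1) by (intro strict_mono_on_leD[OF lam_strict_mono]) auto
    ultimately show False using k by simp
  next
    case False
    then have "x < lam (Suc j)" using k assms(2) by (auto simp: pole_interval_def)
    moreover have "lam (Suc j) \<le> lam k"
      using k False by (intro strict_mono_on_leD[OF lam_strict_mono]) auto
    ultimately show False using k by simp
  qed
qed

lemma ratio_has_derivative:
  assumes "poly Q x \<noteq> 0"
  shows "(ratio has_real_derivative poly wronskian x / (poly Q x)^2) (at x)"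
  using DERIV_divide[OF poly_DERIV poly_DERIV assms]
  by (simp add: ratio_def[abs_def] wronskian_def power2_eq_square)

lemma ratio_strict_mono_on:
  assumes "j \<le> g"
  shows "strict_mono_on (pole_interval j) ratio"
proof (rule strict_mono_onI)
  fix x y assume xy: "x \<in> pole_interval j" "y \<in> pole_interval j" "x < y"
  show "ratio x < ratio y"
  proof (rule DERIV_pos_imp_increasing[OF xy(3)])
    fix t assume "x \<le> t" "t \<le> y"
    then have "t \<in> pole_interval j"
      using is_interval_pole_interval xy(1,2) unfolding is_interval_1 by blast
    then have "poly Q t \<noteq> 0" using poly_Q_nonzero_on_pole_interval assms by blast
    then show "\<exists>d. (ratio has_real_derivative d) (at t) \<and> 0 < d"
      using ratio_has_derivative wronskian_pos by (intro exI conjI) auto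
  qed
qed

lemma ratio_at_infinity_at_pole:
  assumes k: "k \<in> {1..g}"
  shows "filterlim ratio at_infinity (at (lam k))"
proof -
  have Q: "poly Q (lam k) = 0" using k by (auto simp: poly_Q_eq_0_iff)
  then have "poly P (lam k) \<noteq> 0"
    using wronskian_nonzero[of "lam k"] by (auto simp: wronskian_def)
  moreover have "filterlim (poly Q) (at 0) (at (lam k))"
  proof (rule filterlim_atI)
    show "filterlim (poly Q) (nhds 0) (at (lam k))"
      using Q by (metis poly_isCont isCont_def)
    show "eventually (\<lambda>x. poly Q x \<noteq> 0) (at (lam k))"
      by (rule eventually_poly_nonzero_at[OF Q_nonzero])
  qed
  ultimately show ?thesis
    unfolding ratio_def[abs_def] by (intro filterlim_divide_at_infinity[OF tendsto_poly]) auto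
qed

lemma ratio_at_infinity: "filterlim ratio at_infinity at_infinity"
proof -
  have P: "P \<noteq> 0" using degree_P by auto
  have "((\<lambda>x. poly Q x / poly P x) \<longlongrightarrow> 0) at_infinity"
    using degree_P degree_Q by (intro poly_divide_tendsto_0_at_infinity) simp
  moreover have "eventually (\<lambda>x. poly Q x / poly P x \<noteq> 0) at_infinity"
    using poly_eventually_not_zero[OF P] poly_eventually_not_zero[OF Q_nonzero]
    by eventually_elim simp
  ultimately have "filterlim (\<lambda>x. inverse (poly Q x / poly P x)) at_infinity at_infinity"
    by (intro filterlim_compose[OF filterlim_inverse_at_infinity] filterlim_atI)
  then show ?thesis by (simp add: ratio_def[abs_def])
qed

definition left_end :: "nat \<Rightarrow> real filter" where
  "left_end j = (if j = 0 then at_bot else at_right (lam j))"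

definition right_end :: "nat \<Rightarrow> real filter" where
  "right_end j = (if j = g then at_top else at_left (lam (Suc j)))"

lemma lam_less_lam_Suc: "1 \<le> j \<Longrightarrow> j < g \<Longrightarrow> lam j < lam (Suc j)"
  by (rule strict_mono_onD[OF lam_strict_mono]) auto

lemma left_end_nontrivial: "left_end j \<noteq> bot"
  by (simp add: left_end_def)

lemma right_end_nontrivial: "right_end j \<noteq> bot"
  by (simp add: right_end_def)

lemma eventually_left_end_pole_interval:
  assumes "j \<le> g"
  shows "eventually (\<lambda>x. x \<in> pole_interval j) (left_end j)"
proof (cases "j = 0")
  case True
  then show ?thesis by (simp add: left_end_def pole_interval_def)
next
  case False
  have "eventually (\<lambda>x. lam j < x \<and> (j = g \<or> x < lam (Suc j))) (at_right (lam j))"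
  proof (cases "j = g")
    case False
    then show ?thesis
      using eventually_at_right_real[OF lam_less_lam_Suc] \<open>j \<noteq> 0\<close> assms
      by (auto elim!: eventually_mono)
  qed (simp add: eventually_at_right_less)
  then show ?thesis using False by (simp add: left_end_def pole_interval_def)
qed

lemma eventually_right_end_pole_interval:
  assumes "j \<le> g"
  shows "eventually (\<lambda>x. x \<in> pole_interval j) (right_end j)"
proof (cases "j = g")
  case True
  then show ?thesis by (simp add: right_end_def pole_interval_def)
next
  case False
  have "eventually (\<lambda>x. (j = 0 \<or> lam j < x) \<and> x < lam (Suc j)) (at_left (lam (Suc j)))"
  proof (cases "j = 0")
    case False
    then show ?thesis
      using eventually_at_left_real[OF lam_less_lam_Suc] \<open>j \<noteq> g\<close> assms
      by (auto elim!: eventually_mono)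
  qed (simp add: eventually_at_filter)
  then show ?thesis using False by (simp add: right_end_def pole_interval_def)
qed

lemma eventually_left_end_le:
  assumes "y \<in> pole_interval j"
  shows "eventually (\<lambda>x. x \<le> y) (left_end j)"
proof (cases "j = 0")
  case False
  then show ?thesis
    using eventually_at_right_real[of "lam j" y] assms
    by (auto simp: left_end_def pole_interval_def elim!: eventually_mono)
qed (simp add: left_end_def)

lemma eventually_right_end_ge:
  assumes "y \<in> pole_interval j"
  shows "eventually (\<lambda>x. y \<le> x) (right_end j)"
proof (cases "j = g")
  case False
  then show ?thesis
    using eventually_at_left_real[of y "lam (Suc j)"] assms
    by (auto simp: right_end_def pole_interval_def elim!: eventually_mono)
qed (simp add: right_end_def)

lemma ratio_at_infinity_left_end:
  assumes "j \<le> g"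
  shows "filterlim ratio at_infinity (left_end j)"
proof (cases "j = 0")
  case True
  then show ?thesis
    using filterlim_mono[OF ratio_at_infinity order_refl at_bot_le_at_infinity] by (simp add: left_end_def)
next
  case False
  then show ?thesis
    using filterlim_within_subset[OF ratio_at_infinity_at_pole[of j]] assms by (simp add: left_end_def)
qed

lemma ratio_at_infinity_right_end:
  assumes "j \<le> g"
  shows "filterlim ratio at_infinity (right_end j)"
proof (cases "j = g")
  case True
  then show ?thesis
    using filterlim_mono[OF ratio_at_infinity order_refl at_top_le_at_infinity] by (simp add: right_end_def)
next
  case False
  then show ?thesis
    using filterlim_within_subset[OF ratio_at_infinity_at_pole[of "Suc j"]] assms by (simp add: right_end_def)
qed

lemma ratio_image_pole_interval:
  assumes "j \<le> g"
  shows "ratio ` pole_interval j = UNIV"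
proof (rule mono_on_image_eq_UNIV_if_unbounded)
  show "pole_interval j \<noteq> {}"
    using eventually_happens'[OF right_end_nontrivial eventually_right_end_pole_interval[OF assms]]
    by blast
  show "continuous_on (pole_interval j) ratio"
    using poly_Q_nonzero_on_pole_interval[OF assms]
    unfolding ratio_def[abs_def] by (intro continuous_intros) auto
  show "mono_on (pole_interval j) ratio"
    by (rule strict_mono_on_imp_mono_on[OF ratio_strict_mono_on[OF assms]])
  show "eventually (\<lambda>x. x \<in> pole_interval j \<and> x \<le> y) (left_end j)" if "y \<in> pole_interval j" for y
    using eventually_left_end_pole_interval[OF assms] eventually_left_end_le[OF that]
    by (rule eventually_conj)
  show "eventually (\<lambda>x. x \<in> pole_interval j \<and> y \<le> x) (right_end j)" if "y \<in> pole_interval j" for y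
    using eventually_right_end_pole_interval[OF assms] eventually_right_end_ge[OF that]
    by (rule eventually_conj)
qed (use assms in \<open>simp_all add: is_interval_pole_interval left_end_nontrivial right_end_nontrivial
      ratio_at_infinity_left_end ratio_at_infinity_right_end\<close>)

definition root :: "nat \<Rightarrow> real \<Rightarrow> real" where
  "root j c = the_inv_into (pole_interval j) ratio c"

lemma inj_on_ratio: "j \<le> g \<Longrightarrow> inj_on ratio (pole_interval j)"
  by (rule strict_mono_on_imp_inj_on[OF ratio_strict_mono_on])

lemma root_in_pole_interval: "j \<le> g \<Longrightarrow> root j c \<in> pole_interval j"
  unfolding root_def by (rule the_inv_into_into[OF inj_on_ratio]) (simp_all add: ratio_image_pole_interval)

lemma ratio_root: "j \<le> g \<Longrightarrow> ratio (root j c) = c"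
  unfolding root_def by (rule f_the_inv_into_f[OF inj_on_ratio]) (simp_all add: ratio_image_pole_interval)

lemma poly_pencil_eq_0_iff:
  assumes "j \<le> g" "x \<in> pole_interval j"
  shows "poly (P - smult c Q) x = 0 \<longleftrightarrow> ratio x = c"
  using poly_Q_nonzero_on_pole_interval[OF assms] by (auto simp: ratio_def field_simps)

lemma less_root_iff:
  assumes "j \<le> g" "t \<in> pole_interval j"
  shows "t < root j c \<longleftrightarrow> ratio t < c"
  using strict_mono_on_less[OF ratio_strict_mono_on[OF assms(1)] assms(2) root_in_pole_interval[OF assms(1)]]
  by (simp add: ratio_root[OF assms(1)])

lemma root_less_iff:
  assumes "j \<le> g" "t \<in> pole_interval j"
  shows "root j c < t \<longleftrightarrow> c < ratio t"
  using strict_mono_on_less[OF ratio_strict_mono_on[OF assms(1)] root_in_pole_interval[OF assms(1)] assms(2)]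
  by (simp add: ratio_root[OF assms(1)])

lemma root_strict_mono: "j \<le> g \<Longrightarrow> strict_mono (root j)"
  by (rule strict_monoI) (simp add: less_root_iff root_in_pole_interval ratio_root)

lemma root_less_root:
  assumes "j < k" "k \<le> g"
  shows "root j c < root k c"
proof -
  have "root j c < lam (Suc j)" "lam k < root k c"
    using root_in_pole_interval[of j c] root_in_pole_interval[of k c] assms
    by (auto simp: pole_interval_def)
  moreover have "lam (Suc j) \<le> lam k"
    using assms by (intro strict_mono_on_leD[OF lam_strict_mono]) auto
  ultimately show ?thesis by simp
qed

lemma eventually_less_root:
  "j \<le> g \<Longrightarrow> t \<in> pole_interval j \<Longrightarrow> eventually (\<lambda>c. t < root j c) at_top"
  using eventually_gt_at_top[of "ratio t"] by eventually_elim (simp add: less_root_iff)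

lemma eventually_root_less:
  "j \<le> g \<Longrightarrow> t \<in> pole_interval j \<Longrightarrow> eventually (\<lambda>c. root j c < t) at_bot"
  using eventually_gt_at_bot[of "ratio t"] by eventually_elim (simp add: root_less_iff)

lemma root_tendsto_right_pole:
  assumes "j < g"
  shows "(root j \<longlongrightarrow> lam (Suc j)) at_top"
proof (rule order_tendstoI)
  fix l assume "l < lam (Suc j)"
  then have "eventually (\<lambda>x. x \<in> pole_interval j \<and> l < x) (right_end j)"
    using eventually_right_end_pole_interval[of j] eventually_at_left_real[of l "lam (Suc j)"] assms
    by (auto simp: right_end_def elim: eventually_elim2)
  then obtain t where "t \<in> pole_interval j" "l < t"
    using eventually_happens'[OF right_end_nontrivial] by blast
  then show "eventually (\<lambda>c. l < root j c) at_top"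
    using eventually_less_root[of j t] assms by (auto elim: eventually_mono)
next
  fix u assume "lam (Suc j) < u"
  have "root j c < lam (Suc j)" for c
    using root_in_pole_interval[of j c] assms by (simp add: pole_interval_def)
  with \<open>lam (Suc j) < u\<close> show "eventually (\<lambda>c. root j c < u) at_top"
    by (intro always_eventually) (auto intro: less_trans)
qed

lemma root_tendsto_left_pole:
  assumes "1 \<le> j" "j \<le> g"
  shows "(root j \<longlongrightarrow> lam j) at_bot"
proof (rule order_tendstoI)
  fix u assume "lam j < u"
  then have "eventually (\<lambda>x. x \<in> pole_interval j \<and> x < u) (left_end j)"
    using eventually_left_end_pole_interval[of j] eventually_at_right_real[of "lam j" u] assms
    by (auto simp: left_end_def elim: eventually_elim2)
  then obtain t where "t \<in> pole_interval j" "t < u"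
    using eventually_happens'[OF left_end_nontrivial] by blast
  then show "eventually (\<lambda>c. root j c < u) at_bot"
    using eventually_root_less[of j t] assms by (auto elim: eventually_mono)
next
  fix l assume "l < lam j"
  have "lam j < root j c" for c
    using root_in_pole_interval[of j c] assms by (simp add: pole_interval_def)
  with \<open>l < lam j\<close> show "eventually (\<lambda>c. l < root j c) at_bot"
    by (intro always_eventually) (auto intro: less_trans)
qed

lemma root_last_at_top: "filterlim (root g) at_top at_top"
  unfolding filterlim_at_top_dense
proof
  fix l
  have "eventually (\<lambda>x. x \<in> pole_interval g \<and> l < x) (right_end g)"
    using eventually_right_end_pole_interval[of g] eventually_gt_at_top[of l]
    by (simp add: right_end_def eventually_conj)
  then obtain t where "t \<in> pole_interval g" "l < t"
    using eventually_happens'[OF right_end_nontrivial] by blast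
  then show "eventually (\<lambda>c. l < root g c) at_top"
    using eventually_less_root[of g t] by (auto elim: eventually_mono)
qed

lemma root_first_at_bot: "filterlim (root 0) at_bot at_bot"
  unfolding filterlim_at_bot_dense
proof
  fix u
  have "eventually (\<lambda>x. x \<in> pole_interval 0 \<and> x < u) (left_end 0)"
    using eventually_left_end_pole_interval[of 0] eventually_gt_at_bot[of u]
    by (simp add: left_end_def eventually_conj)
  then obtain t where "t \<in> pole_interval 0" "t < u"
    using eventually_happens'[OF left_end_nontrivial] by blast
  then show "eventually (\<lambda>c. root 0 c < u) at_bot"
    using eventually_root_less[of 0 t] by (auto elim: eventually_mono)
qed

lemma degree_pencil: "degree (P - smult c Q) = Suc g"
  by (simp add: degree_diff_smult_eq_left degree_P degree_Q)

lemma poly_pencil_root: "j \<le> g \<Longrightarrow> poly (P - smult c Q) (root j c) = 0"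
  by (simp only: poly_pencil_eq_0_iff root_in_pole_interval ratio_root)

lemma inj_on_root: "inj_on (\<lambda>j. root j c) {0..g}"
proof (rule inj_onI)
  fix i j assume "i \<in> {0..g}" "j \<in> {0..g}" "root i c = root j c"
  then show "i = j"
    using root_less_root[of i j c] root_less_root[of j i c] by (cases i j rule: linorder_cases) auto
qed

lemma pencil_roots: "{x. poly (P - smult c Q) x = 0} = (\<lambda>j. root j c) ` {0..g}"
  using degree_pencil[of c] poly_pencil_root
  by (intro poly_roots_eq_if_card_ge_degree) (auto simp: card_image[OF inj_on_root])

lemma complex_roots_eq_pencil_roots:
  fixes F :: "complex poly"
  assumes "F \<noteq> 0" "degree F \<le> Suc g"
    and "\<And>x. poly (P - smult c Q) x = 0 \<Longrightarrow> poly F (complex_of_real x) = 0"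
  shows "{w. poly F w = 0} = (\<lambda>j. complex_of_real (root j c)) ` {0..g}"
proof (rule poly_roots_eq_if_card_ge_degree)
  have "inj_on (\<lambda>j. complex_of_real (root j c)) {0..g}"
    using inj_on_root by (auto simp: inj_on_def)
  then show "degree F \<le> card ((\<lambda>j. complex_of_real (root j c)) ` {0..g})"
    using assms(2) by (simp add: card_image)
qed (use assms poly_pencil_root in auto)

end

section \<open>Stationary phase points\<close>

text \<open>\<open>Lt\<close> and \<open>Lam\<close> are the numerators of the normalized differentials \<open>\<omega>\<^sub>p\<^sub>\<infinity>\<^sub>,\<^sub>2\<close> and
  \<open>\<omega>\<^sub>p\<^sub>\<infinity>\<^sub>,\<^sub>0\<close>.\<close>

locale normalized_differentials =
  fixes g :: nat and E lam lt :: "nat \<Rightarrow> real"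
  assumes E_incr: "\<forall>i<2*g. E i < E (Suc i)"
    and lam_per: "\<forall>j\<in>{1..g}. a_period_vanishes E g (\<lambda>x. \<Prod>k\<in>{1..g}. x - lam k) j"
    and lt_per: "\<forall>j\<in>{1..g}. a_period_vanishes E g (\<lambda>x. \<Prod>k\<in>{0..g}. x - lt k) j"
    and lam_gap: "\<forall>j\<in>{1..g}. E (2*j-1) < lam j \<and> lam j < E (2*j)"
begin

definition Lt :: "real poly" where
  "Lt = (\<Prod>k\<in>{0..g}. [:- lt k, 1:])"

definition Lam :: "real poly" where
  "Lam = (\<Prod>k\<in>{1..g}. [:- lam k, 1:])"

lemma degree_Lt_Lam_pencil: "degree (Lt - smult c Lam) = Suc g"
  by (simp add: Lt_def Lam_def degree_diff_smult_eq_left degree_prod_linear)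

lemma a_period_vanishes_pencil:
  assumes "j \<in> {1..g}"
  shows "a_period_vanishes E g (poly (Lt - smult c Lam)) j"
proof -
  have "poly (Lt - smult c Lam) = (\<lambda>x. (\<Prod>k\<in>{0..g}. x - lt k) - c * (\<Prod>k\<in>{1..g}. x - lam k))"
    by (simp add: Lt_def Lam_def poly_prod fun_eq_iff)
  then show ?thesis using a_period_vanishes_diff_scaled lt_per lam_per assms by simp
qed

sublocale squarefree_pencil Lt Lam g lam
proof
  show "strict_mono_on {1..g} lam"
    using lam_gap by (intro strict_mono_onI spectral_gap_less[OF E_incr]) (auto simp: spectral_gap_def)
  show "rsquarefree (Lt - smult c Lam)" for c
    using degree_Lt_Lam_pencil[of c] a_period_vanishes_pencil
    by (intro rsquarefree_if_a_periods_vanish[OF E_incr]) auto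
  show "lead_coeff Lt = 1" unfolding Lt_def by (rule lead_coeff_prod_linear)
qed (simp_all add: Lt_def Lam_def degree_prod_linear)

text \<open>The zeros of \<open>12 Lt + v Lam\<close> are those of the pencil member \<open>Lt - (-v/12) Lam\<close>.\<close>

definition stationary_point :: "nat \<Rightarrow> real \<Rightarrow> real" where
  "stationary_point j v = root j (- v / 12)"

lemma stationary_points_eq_roots:
  "{w::complex. 12 * (\<Prod>k\<in>{0..g}. w - complex_of_real (lt k))
      + complex_of_real v * (\<Prod>k\<in>{1..g}. w - complex_of_real (lam k)) = 0}
   = {complex_of_real (stationary_point j v) | j. j \<le> g}"
proof -
  define F where "F = smult 12 (\<Prod>k\<in>{0..g}. [:- complex_of_real (lt k), 1:])
    + smult (complex_of_real v) (\<Prod>k\<in>{1..g}. [:- complex_of_real (lam k), 1:])"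
  have poly_F: "poly F w = 12 * (\<Prod>k\<in>{0..g}. w - complex_of_real (lt k))
      + complex_of_real v * (\<Prod>k\<in>{1..g}. w - complex_of_real (lam k))" for w
    by (simp add: F_def poly_prod)
  have "degree F = Suc g"
    unfolding F_def
    by (subst degree_add_eq_left) (auto simp: degree_prod_linear le_less_trans[OF degree_smult_le])
  moreover have "poly F (complex_of_real x) = 0" if "poly (Lt - smult (- v / 12) Lam) x = 0" for x
  proof -
    have "complex_of_real (12 * poly Lt x + v * poly Lam x) = 0" using that by (simp add: field_simps)
    then show ?thesis unfolding poly_F by (simp add: Lt_def Lam_def poly_prod of_real_prod)
  qed
  ultimately have "{w. poly F w = 0} = (\<lambda>j. complex_of_real (stationary_point j v)) ` {0..g}"
    unfolding stationary_point_def by (intro complex_roots_eq_pencil_roots) auto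
  then show ?thesis unfolding poly_F by auto
qed

lemma stationary_point_between_lams:
  "j \<le> g \<Longrightarrow>
    (j = 0 \<or> lam j < stationary_point j v) \<and> (j = g \<or> stationary_point j v < lam (j+1))"
  using root_in_pole_interval by (simp add: stationary_point_def pole_interval_def)

lemma stationary_point_in_gap:
  assumes j: "j \<in> {1..g}"
  shows "\<exists>k\<le>g. E (2*j-1) < stationary_point k v \<and> stationary_point k v < E (2*j)"
proof -
  have "Lt - smult (- v / 12) Lam \<noteq> 0" using degree_pencil by (metis Zero_not_Suc degree_0)
  then obtain x where x: "x \<in> spectral_gap E j" "poly (Lt - smult (- v / 12) Lam) x = 0"
    using a_period_vanishes_imp_root_in_gap[OF E_incr j a_period_vanishes_pencil[OF j]] by blast
  then have "x \<in> (\<lambda>k. root k (- v / 12)) ` {0..g}" by (simp only: pencil_roots[symmetric]) simp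
  then obtain k where "k \<in> {0..g}" "x = stationary_point k v"
    unfolding stationary_point_def by (rule imageE)
  then show ?thesis using x(1) by (intro exI[of _ k]) (simp add: spectral_gap_def)
qed

lemma stationary_point_strict_decreasing:
  "j \<le> g \<Longrightarrow> v < w \<Longrightarrow> stationary_point j w < stationary_point j v"
  unfolding stationary_point_def by (intro strict_monoD[OF root_strict_mono]) auto

lemma stationary_point_limits:
  assumes "j \<le> g"
  shows "(if j < g then (stationary_point j \<longlongrightarrow> lam (j+1)) at_bot
           else filterlim (stationary_point j) at_top at_bot)
       \<and> (if 1 \<le> j then (stationary_point j \<longlongrightarrow> lam j) at_top
           else filterlim (stationary_point j) at_bot at_top)"
proof -
  have "stationary_point j = (\<lambda>v. root j (- v / 12))" by (simp add: stationary_point_def fun_eq_iff)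
  then show ?thesis
    using assms filterlim_compose[OF root_tendsto_right_pole filterlim_neg_divide_at_top_at_bot[of 12], of j]
      filterlim_compose[OF root_last_at_top filterlim_neg_divide_at_top_at_bot[of 12]]
      filterlim_compose[OF root_tendsto_left_pole filterlim_neg_divide_at_bot_at_top[of 12], of j]
      filterlim_compose[OF root_first_at_bot filterlim_neg_divide_at_bot_at_top[of 12]]
    by (cases "j = 0") auto
qed

end

theorem lemma5p1:
  fixes g :: nat and E lam lt :: "nat \<Rightarrow> real"
  assumes E_incr: "\<forall>i<2*g. E i < E (Suc i)"
    and lam_per: "\<forall>j\<in>{1..g}. a_period_vanishes E g (\<lambda>x. \<Prod>k\<in>{1..g}. x - lam k) j"
    and lt_per: "\<forall>j\<in>{1..g}. a_period_vanishes E g (\<lambda>x. \<Prod>k\<in>{0..g}. x - lt k) j"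
    and lt_sum: "(\<Sum>k\<in>{0..g}. lt k) = (\<Sum>i\<in>{0..2*g}. E i) / 2"
    and lam_gap: "\<forall>j\<in>{1..g}. E (2*j-1) < lam j \<and> lam j < E (2*j)"
    and lt_gap: "\<forall>j\<in>{1..g}. E (2*j-1) < lt j \<and> lt j < E (2*j)"
  shows "\<exists>z :: nat \<Rightarrow> real \<Rightarrow> real.
    (\<forall>v::real.
       {w::complex. 12 * (\<Prod>k\<in>{0..g}. w - complex_of_real (lt k))
                    + complex_of_real v * (\<Prod>k\<in>{1..g}. w - complex_of_real (lam k)) = 0}
         = {complex_of_real (z j v) | j. j \<le> g}
     \<and> (\<forall>j\<le>g. (j = 0 \<or> lam j < z j v) \<and> (j = g \<or> z j v < lam (j+1)))
     \<and> (\<forall>j\<in>{1..g}. \<exists>k\<le>g. E (2*j-1) < z k v \<and> z k v < E (2*j)))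
    \<and> (\<forall>j\<le>g. \<forall>v w. v < w \<longrightarrow> z j w < z j v)
    \<and> (\<forall>j\<le>g. (if j < g then (z j \<longlongrightarrow> lam (j+1)) at_bot
                         else filterlim (z j) at_top at_bot)
             \<and> (if 1 \<le> j then (z j \<longlongrightarrow> lam j) at_top
                         else filterlim (z j) at_bot at_top))"
proof -
  interpret normalized_differentials g E lam lt
    using E_incr lam_per lt_per lam_gap by unfold_locales
  show ?thesis
    using stationary_points_eq_roots stationary_point_between_lams stationary_point_in_gap
      stationary_point_strict_decreasing stationary_point_limits
    by (intro exI[of _ stationary_point] conjI allI impI ballI) blast+
qed

end
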